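(* Fix integers $n$ and $t$ with $n\ge 4$ and $3\le t\le n-1$. If $G$ is an $n$-vertex graph with minimum degree at least $1$ and $G\neq K_{1,n-1}$, then $i_t(G)<i_t(K_{1,n-1})$.
   Context: Graphs are simple, loopless and finite. $i_t(G)$ denotes the number of independent sets of size $t$ in $G$. $K_{1,n-1}$ is the star on $n$ vertices. *)

theory Defs
  imports Main
begin

definition simple_graph :: "'a set \<Rightarrow> 'a set set \<Rightarrow> bool" where
  "simple_graph V E \<longleftrightarrow> finite V \<and> (\<forall>e\<in>E. e \<subseteq> V \<and> card e = 2)"

definition degree :: "'a set set \<Rightarrow> 'a \<Rightarrow> nat" where
  "degree E v = card {e\<in>E. v \<in> e}"

definition independent_set :: "'a set \<Rightarrow> 'a set set \<Rightarrow> 'a set \<Rightarrow> bool" where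
  "independent_set V E S \<longleftrightarrow> S \<subseteq> V \<and> (\<forall>u\<in>S. \<forall>v\<in>S. {u, v} \<notin> E)"

definition ind_count :: "nat \<Rightarrow> 'a set \<Rightarrow> 'a set set \<Rightarrow> nat" where
  "ind_count t V E = card {S. independent_set V E S \<and> card S = t}"

definition star_edges :: "'a set \<Rightarrow> 'a \<Rightarrow> 'a set set" where
  "star_edges V c = {{c, v} | v. v \<in> V \<and> v \<noteq> c}"

text \<open>G is (isomorphic to) the star K_{1,n-1} on its own vertex set.\<close>
definition is_star :: "'a set \<Rightarrow> 'a set set \<Rightarrow> bool" where
  "is_star V E \<longleftrightarrow> (\<exists>c\<in>V. E = star_edges V c)"

end

theory Submission
  imports Defs
begin

text \<open>
  If some vertex u is adjacent to all others, every independent set of size at least 2 avoids u,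
  so i_t(G) = i_t(G - u) \<le> C(n-1, t), and the inequality is strict because G is not a star and
  hence has an edge missing u.

  Otherwise every degree d(v) lies in [1, n-2]. An independent triple through v is v together
  with a non-edge inside the non-neighbourhood of v, which has n - 1 - d(v) vertices and at least
  m - \<Sum>_{w ~ v} d(w) edges. Summing over v and using \<Sum> d(v) = 2m gives
  6 i_3(G) \<le> \<Sum>_v [(n-1-d)(n-2-d) + 2d^2 - nd] \<le> n (n-2)(n-4) < (n-1)(n-2)(n-3) = 6 C(n-1, 3).
  For larger t, double counting pairs T \<subset> S of independent sets gives
  (k+1) i_{k+1} \<le> (n-k-1) i_k, since some vertex of T has a neighbour outside T;
  binomial coefficients satisfy this recursion with equality, so the strict inequality propagates.
\<close>

definition neighbours :: "'a set \<Rightarrow> 'a set set \<Rightarrow> 'a \<Rightarrow> 'a set" where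
  "neighbours V E v = {w\<in>V. {v, w} \<in> E}"

definition non_neighbours :: "'a set \<Rightarrow> 'a set set \<Rightarrow> 'a \<Rightarrow> 'a set" where
  "non_neighbours V E v = V - insert v (neighbours V E v)"

lemma simple_graph_finite: "simple_graph V E \<Longrightarrow> finite V"
  by (simp add: simple_graph_def)

lemma simple_graph_finite_edges: "simple_graph V E \<Longrightarrow> finite E"
  unfolding simple_graph_def by (meson Pow_iff finite_Pow_iff finite_subset subsetI)

lemma simple_graph_edgeE:
  assumes "simple_graph V E" "e \<in> E"
  obtains x y where "e = {x, y}" "x \<noteq> y" "x \<in> V" "y \<in> V"
  using assms unfolding simple_graph_def by (metis card_2_iff insert_subset)

lemma simple_graph_singleton_not_edge: "simple_graph V E \<Longrightarrow> {x} \<notin> E"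
  by (auto simp: simple_graph_def)

lemma neighbours_subset: "neighbours V E v \<subseteq> V"
  by (auto simp: neighbours_def)

lemma not_in_neighbours: "simple_graph V E \<Longrightarrow> v \<notin> neighbours V E v"
  using simple_graph_singleton_not_edge by (fastforce simp: neighbours_def)

lemma degree_eq_card_neighbours:
  assumes "simple_graph V E"
  shows "degree E v = card (neighbours V E v)"
proof -
  have "{e\<in>E. v \<in> e} = (\<lambda>w. {v, w}) ` neighbours V E v"
  proof (intro equalityI subsetI)
    fix e assume "e \<in> {e\<in>E. v \<in> e}"
    moreover from this obtain x y where "e = {x, y}" "x \<in> V" "y \<in> V"
      using simple_graph_edgeE[OF assms] by blast
    ultimately show "e \<in> (\<lambda>w. {v, w}) ` neighbours V E v"
      by (auto simp: neighbours_def insert_commute)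
  qed (auto simp: neighbours_def)
  moreover have "inj_on (\<lambda>w. {v, w}) (neighbours V E v)"
    by (auto simp: inj_on_def doubleton_eq_iff)
  ultimately show ?thesis
    unfolding degree_def by (simp add: card_image)
qed

lemma sum_degree:
  assumes "simple_graph V E"
  shows "(\<Sum>v\<in>V. degree E v) = 2 * card E"
proof -
  have "(\<Sum>v\<in>V. card {e\<in>E. v \<in> e}) = (\<Sum>e\<in>E. card {v\<in>V. v \<in> e})"
    using assms by (intro sum_multicount_gen)
      (auto simp: simple_graph_finite simple_graph_finite_edges)
  also have "\<dots> = (\<Sum>e\<in>E. 2)"
  proof (rule sum.cong[OF refl])
    fix e assume "e \<in> E"
    then have "{v\<in>V. v \<in> e} = e" "card e = 2"
      using assms by (auto simp: simple_graph_def)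
    then show "card {v\<in>V. v \<in> e} = 2"
      by simp
  qed
  finally show ?thesis by (simp add: degree_def)
qed

lemma sum_sum_neighbours:
  assumes "simple_graph V E"
  shows "(\<Sum>v\<in>V. \<Sum>w\<in>neighbours V E v. f w) = (\<Sum>w\<in>V. of_nat (degree E w) * f w)"
proof -
  have fin: "finite V" using assms by (rule simple_graph_finite)
  have "(\<Sum>v\<in>V. \<Sum>w\<in>neighbours V E v. f w) = (\<Sum>w\<in>V. \<Sum>v\<in>{v\<in>V. {v, w} \<in> E}. f w)"
    unfolding neighbours_def by (rule sum.swap_restrict[OF fin fin])
  also have "\<dots> = (\<Sum>w\<in>V. of_nat (degree E w) * f w)"
  proof (intro sum.cong refl)
    fix w assume "w \<in> V"
    have "{v\<in>V. {v, w} \<in> E} = neighbours V E w"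
      by (auto simp: neighbours_def insert_commute)
    then show "(\<Sum>v\<in>{v\<in>V. {v, w} \<in> E}. f w) = of_nat (degree E w) * f w"
      by (simp add: degree_eq_card_neighbours[OF assms])
  qed
  finally show ?thesis .
qed

lemma card_non_neighbours:
  assumes "simple_graph V E" "v \<in> V"
  shows "card (non_neighbours V E v) = card V - 1 - degree E v"
proof -
  have fin: "finite V" using assms(1) by (rule simple_graph_finite)
  have "card (insert v (neighbours V E v)) = Suc (degree E v)"
    using not_in_neighbours[OF assms(1)] finite_subset[OF neighbours_subset fin]
    by (simp add: degree_eq_card_neighbours[OF assms(1)])
  moreover have "insert v (neighbours V E v) \<subseteq> V"
    using assms(2) neighbours_subset by fast
  ultimately show ?thesis
    unfolding non_neighbours_def using fin by (metis card_Diff_subset diff_Suc_eq_diff_pred finite_subset)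
qed

lemma degree_le_card_minus_one:
  assumes sg: "simple_graph V E" and "v \<in> V"
  shows "degree E v \<le> card V - 1"
proof -
  have "neighbours V E v \<subseteq> V - {v}"
    using neighbours_subset not_in_neighbours[OF sg] by fast
  then have "card (neighbours V E v) \<le> card (V - {v})"
    using simple_graph_finite[OF sg] by (intro card_mono) auto
  then show ?thesis
    using \<open>v \<in> V\<close> by (simp add: degree_eq_card_neighbours[OF sg])
qed

lemma degree_le_card_minus_two:
  assumes sg: "simple_graph V E" and "v \<in> V" "w \<in> V - {v}" "{v, w} \<notin> E"
  shows "degree E v \<le> card V - 2"
proof -
  have "neighbours V E v \<subseteq> V - {v, w}"
    using assms(3,4) neighbours_subset not_in_neighbours[OF sg] by (auto simp: neighbours_def)
  then have "card (neighbours V E v) \<le> card (V - {v, w})"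
    using simple_graph_finite[OF sg] by (intro card_mono) auto
  also have "\<dots> = card V - 2"
    using assms(2,3) simple_graph_finite[OF sg] by (auto simp: card_Diff_subset)
  finally show ?thesis
    by (simp add: degree_eq_card_neighbours[OF sg])
qed

section \<open>Graphs with a universal vertex\<close>

lemma independent_set_subset: "independent_set V E S \<Longrightarrow> T \<subseteq> S \<Longrightarrow> independent_set V E T"
  by (auto simp: independent_set_def)

lemma finite_independent_sets: "finite V \<Longrightarrow> finite {S. independent_set V E S \<and> card S = t}"
  by (rule finite_subset[of _ "Pow V"]) (auto simp: independent_set_def)

lemma ind_count_edgeless:
  assumes "finite V" "\<forall>e\<in>E. \<not> e \<subseteq> V"
  shows "ind_count t V E = card V choose t"
proof -
  have "{S. independent_set V E S \<and> card S = t} = {S. S \<subseteq> V \<and> card S = t}"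
    using assms(2) by (auto simp: independent_set_def)
  then show ?thesis
    unfolding ind_count_def using assms(1) by (simp add: n_subsets)
qed

lemma ind_count_less_binomial:
  assumes "finite V" "{x, y} \<in> E" "x \<in> V" "y \<in> V" "x \<noteq> y" "2 \<le> t" "t \<le> card V"
  shows "ind_count t V E < card V choose t"
proof -
  have "t - 2 \<le> card (V - {x, y})"
    using assms by (simp add: card_Diff_subset)
  then obtain T where T: "T \<subseteq> V - {x, y}" "card T = t - 2"
    by (meson obtain_subset_with_card_n)
  define S where "S = {x, y} \<union> T"
  have "finite T" "x \<notin> T" "y \<notin> T"
    using T assms(1) finite_subset by auto
  then have "S \<subseteq> V" "card S = t" "\<not> independent_set V E S"
    using T assms by (auto simp: S_def independent_set_def)
  then have "{S. independent_set V E S \<and> card S = t} \<subset> {S. S \<subseteq> V \<and> card S = t}"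
    unfolding independent_set_def by blast
  then have "ind_count t V E < card {S. S \<subseteq> V \<and> card S = t}"
    unfolding ind_count_def using assms(1) by (intro psubset_card_mono) auto
  then show ?thesis
    using assms(1) by (simp add: n_subsets)
qed

lemma ind_count_Diff_universal:
  assumes "u \<in> V" "\<forall>w\<in>V - {u}. {u, w} \<in> E" "2 \<le> t"
  shows "ind_count t V E = ind_count t (V - {u}) E"
proof -
  have "u \<notin> S" if "independent_set V E S" "card S = t" for S
  proof
    assume "u \<in> S"
    have "\<not> S \<subseteq> {u}"
      using card_mono[of "{u}" S] \<open>card S = t\<close> assms(3) by auto
    then obtain w where "w \<in> S" "w \<noteq> u" by blast
    then show False
      using that(1) assms(2) \<open>u \<in> S\<close> by (auto simp: independent_set_def)
  qed
  then have "{S. independent_set V E S \<and> card S = t} = {S. independent_set (V - {u}) E S \<and> card S = t}"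
    by (auto simp: independent_set_def)
  then show ?thesis
    by (simp add: ind_count_def)
qed

lemma ind_count_star:
  assumes "finite V" "c \<in> V" "2 \<le> t"
  shows "ind_count t V (star_edges V c) = (card V - 1) choose t"
proof -
  have "ind_count t V (star_edges V c) = ind_count t (V - {c}) (star_edges V c)"
    using assms by (intro ind_count_Diff_universal) (auto simp: star_edges_def)
  also have "\<dots> = card (V - {c}) choose t"
    using assms(1) by (intro ind_count_edgeless) (auto simp: star_edges_def)
  finally show ?thesis
    using assms(1,2) by simp
qed

lemma ind_count_less_if_universal_vertex:
  assumes sg: "simple_graph V E" and "u \<in> V" and univ: "\<forall>w\<in>V - {u}. {u, w} \<in> E"
    and "\<not> is_star V E" "2 \<le> t" "t \<le> card V - 1"
  shows "ind_count t V E < (card V - 1) choose t"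
proof -
  have "E \<noteq> star_edges V u"
    using assms(2,4) by (auto simp: is_star_def)
  moreover have "star_edges V u \<subseteq> E"
    using univ by (auto simp: star_edges_def)
  ultimately obtain e where "e \<in> E" "e \<notin> star_edges V u"
    by blast
  moreover obtain x y where "e = {x, y}" "x \<noteq> y" "x \<in> V" "y \<in> V"
    using simple_graph_edgeE[OF sg \<open>e \<in> E\<close>] .
  moreover have "u \<noteq> x" "u \<noteq> y"
    using calculation by (auto simp: star_edges_def insert_commute)
  ultimately have "{x, y} \<in> E" "x \<noteq> y" "x \<in> V - {u}" "y \<in> V - {u}"
    by auto
  then have "ind_count t (V - {u}) E < card (V - {u}) choose t"
    using assms(5,6) simple_graph_finite[OF sg] \<open>u \<in> V\<close>
    by (intro ind_count_less_binomial) auto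
  then show ?thesis
    using ind_count_Diff_universal[OF assms(2) univ assms(5)] simple_graph_finite[OF sg] \<open>u \<in> V\<close>
    by simp
qed

section \<open>Independent triples through a vertex\<close>

lemma card_independent_sets_containing:
  assumes sg: "simple_graph V E" and "v \<in> V"
  shows "card {S. independent_set V E S \<and> card S = Suc k \<and> v \<in> S}
    = ind_count k (non_neighbours V E v) E"
proof -
  let ?W = "non_neighbours V E v"
  have "{S. independent_set V E S \<and> card S = Suc k \<and> v \<in> S}
      = insert v ` {S. independent_set ?W E S \<and> card S = k}"
  proof (intro equalityI subsetI)
    fix S assume S: "S \<in> {S. independent_set V E S \<and> card S = Suc k \<and> v \<in> S}"
    then have "finite S"
      by (simp add: card_ge_0_finite)
    moreover have "independent_set ?W E (S - {v})"
      using S by (auto simp: independent_set_def non_neighbours_def neighbours_def)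
    ultimately show "S \<in> insert v ` {S. independent_set ?W E S \<and> card S = k}"
      using S by (intro image_eqI[of _ _ "S - {v}"]) auto
  next
    fix S assume "S \<in> insert v ` {S. independent_set ?W E S \<and> card S = k}"
    then obtain T where T: "S = insert v T" "independent_set ?W E T" "card T = k"
      by blast
    then have "v \<notin> T" "finite T"
      using simple_graph_finite[OF sg] finite_subset
      by (auto simp: independent_set_def non_neighbours_def)
    moreover have "independent_set V E S"
      using T \<open>v \<in> V\<close> simple_graph_singleton_not_edge[OF sg]
      by (auto simp: independent_set_def non_neighbours_def neighbours_def insert_commute)
    ultimately show "S \<in> {S. independent_set V E S \<and> card S = Suc k \<and> v \<in> S}"
      using T by simp
  qed
  moreover have "inj_on (insert v) {S. independent_set ?W E S \<and> card S = k}"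
    by (rule inj_onI) (auto simp: independent_set_def non_neighbours_def insert_ident)
  ultimately show ?thesis
    by (simp add: ind_count_def card_image)
qed

lemma Suc_mult_ind_count:
  assumes sg: "simple_graph V E"
  shows "Suc k * ind_count (Suc k) V E = (\<Sum>v\<in>V. ind_count k (non_neighbours V E v) E)"
proof -
  let ?A = "{S. independent_set V E S \<and> card S = Suc k}"
  have fin: "finite V" using sg by (rule simple_graph_finite)
  have "(\<Sum>v\<in>V. card {S\<in>?A. v \<in> S}) = Suc k * card ?A"
  proof (rule sum_multicount[OF fin finite_independent_sets[OF fin]], intro ballI)
    fix S assume "S \<in> ?A"
    then have "{v\<in>V. v \<in> S} = S" "card S = Suc k"
      by (auto simp: independent_set_def)
    then show "card {v\<in>V. v \<in> S} = Suc k" by simp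
  qed
  moreover have "card {S\<in>?A. v \<in> S} = ind_count k (non_neighbours V E v) E" if "v \<in> V" for v
    using card_independent_sets_containing[OF sg that] by simp
  ultimately show ?thesis
    by (simp add: ind_count_def)
qed

lemma ind_count_two_plus_card_edges:
  assumes sg: "simple_graph V E" and "W \<subseteq> V"
  shows "ind_count 2 W E + card {e\<in>E. e \<subseteq> W} = card W choose 2"
proof -
  let ?P = "{P. P \<subseteq> W \<and> card P = 2}"
  have finW: "finite W"
    using simple_graph_finite[OF sg] assms(2) by (rule finite_subset[rotated])
  then have fin: "finite ?P"
    by (simp add: finite_Collect_subsets)
  have sub: "{e\<in>E. e \<subseteq> W} \<subseteq> ?P"
    using sg by (auto simp: simple_graph_def)
  have "independent_set W E P \<longleftrightarrow> P \<subseteq> W \<and> P \<notin> E" if "card P = 2" for P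
  proof -
    obtain x y where "P = {x, y}" "x \<noteq> y"
      using \<open>card P = 2\<close> by (meson card_2_iff)
    then show ?thesis
      using simple_graph_singleton_not_edge[OF sg]
      by (auto simp: independent_set_def insert_commute)
  qed
  then have "{S. independent_set W E S \<and> card S = 2} = ?P - {e\<in>E. e \<subseteq> W}"
    by blast
  then have "ind_count 2 W E + card {e\<in>E. e \<subseteq> W} = card ?P"
    unfolding ind_count_def using sub fin card_mono[OF fin sub]
    by (simp add: card_Diff_subset finite_subset)
  then show ?thesis
    using finW by (simp add: n_subsets)
qed

lemma card_edges_le:
  assumes sg: "simple_graph V E" and "v \<in> V"
  shows "card E \<le> card {e\<in>E. e \<subseteq> non_neighbours V E v} + (\<Sum>w\<in>neighbours V E v. degree E w)"
proof -
  let ?N = "neighbours V E v"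
  have finE: "finite E" using sg by (rule simple_graph_finite_edges)
  have finN: "finite ?N"
    using simple_graph_finite[OF sg] by (rule finite_subset[OF neighbours_subset])
  have "E - {e\<in>E. e \<subseteq> non_neighbours V E v} \<subseteq> (\<Union>w\<in>?N. {e\<in>E. w \<in> e})"
  proof
    fix e assume e: "e \<in> E - {e\<in>E. e \<subseteq> non_neighbours V E v}"
    then obtain x y where xy: "e = {x, y}" "x \<in> V" "y \<in> V"
      using simple_graph_edgeE[OF sg] by blast
    then have "x \<in> ?N \<or> y \<in> ?N"
      using e by (auto simp: non_neighbours_def neighbours_def insert_commute)
    then show "e \<in> (\<Union>w\<in>?N. {e\<in>E. w \<in> e})"
      using e xy by blast
  qed
  then have "card (E - {e\<in>E. e \<subseteq> non_neighbours V E v}) \<le> card (\<Union>w\<in>?N. {e\<in>E. w \<in> e})"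
    using finE by (intro card_mono) (auto intro: rev_finite_subset[of E])
  also have "\<dots> \<le> (\<Sum>w\<in>?N. degree E w)"
    unfolding degree_def using finN by (rule card_UN_le)
  finally have "card (E - {e\<in>E. e \<subseteq> non_neighbours V E v}) \<le> (\<Sum>w\<in>?N. degree E w)" .
  moreover have "card (E - {e\<in>E. e \<subseteq> non_neighbours V E v})
      = card E - card {e\<in>E. e \<subseteq> non_neighbours V E v}"
    using finE by (intro card_Diff_subset) auto
  ultimately show ?thesis
    by linarith
qed

lemma two_mult_choose_two: "2 * (k choose 2) = k * (k - 1)"
  using times_binomial_minus1_eq[of 2 k] by simp

lemma six_mult_choose_three: "6 * (k choose 3) = k * (k - 1) * (k - 2)"
proof -
  have "6 * (k choose 3) = 2 * (k * ((k - 1) choose 2))"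
    using times_binomial_minus1_eq[of 3 k] by simp
  also have "\<dots> = k * (2 * ((k - 1) choose 2))"
    by (simp only: mult.left_commute)
  finally show ?thesis
    by (metis two_mult_choose_two diff_diff_left mult.assoc one_add_one)
qed

lemma twice_ind_count_two_non_neighbours_le:
  assumes sg: "simple_graph V E" and "v \<in> V"
  defines "n \<equiv> int (card V)" and "d \<equiv> int (degree E v)"
  shows "2 * int (ind_count 2 (non_neighbours V E v) E)
    \<le> (n - 1 - d) * (n - 2 - d) - 2 * int (card E) + 2 * (\<Sum>w\<in>neighbours V E v. int (degree E w))"
proof -
  let ?W = "non_neighbours V E v"
  define k where "k = card ?W"
  have "0 < card V"
    using simple_graph_finite[OF sg] \<open>v \<in> V\<close> card_gt_0_iff by blast
  then have k: "int k = n - 1 - d"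
    using card_non_neighbours[OF sg \<open>v \<in> V\<close>] degree_le_card_minus_one[OF sg \<open>v \<in> V\<close>]
    unfolding k_def n_def d_def by linarith
  have "2 * (k choose 2) = k * (k - 1)"
    by (rule two_mult_choose_two)
  moreover have "int (k * (k - 1)) = int k * (int k - 1)"
    by (cases k) (auto simp: algebra_simps)
  moreover have "ind_count 2 ?W E + card {e\<in>E. e \<subseteq> ?W} = k choose 2"
    unfolding k_def using sg by (rule ind_count_two_plus_card_edges) (auto simp: non_neighbours_def)
  moreover have "card E \<le> card {e\<in>E. e \<subseteq> ?W} + (\<Sum>w\<in>neighbours V E v. degree E w)"
    using card_edges_le[OF sg \<open>v \<in> V\<close>] .
  ultimately have "2 * int (ind_count 2 ?W E) \<le> int k * (int k - 1) - 2 * int (card E)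
      + 2 * int (\<Sum>w\<in>neighbours V E v. degree E w)"
    by linarith
  then show ?thesis
    using k by (simp add: algebra_simps)
qed

lemma six_mult_ind_count_three_le:
  assumes sg: "simple_graph V E"
  defines "n \<equiv> int (card V)" and "d \<equiv> \<lambda>v. int (degree E v)"
  shows "int (6 * ind_count 3 V E) \<le> (\<Sum>v\<in>V. (n - 1 - d v) * (n - 2 - d v) + 2 * d v * d v - n * d v)"
proof -
  define f where "f v = (n - 1 - d v) * (n - 2 - d v)" for v
  let ?m = "int (card E)"
  have sum_d: "(\<Sum>v\<in>V. d v) = 2 * ?m"
    using sum_degree[OF sg] unfolding d_def by (metis of_nat_mult of_nat_numeral of_nat_sum)
  have sum_neighbour_d: "(\<Sum>v\<in>V. \<Sum>w\<in>neighbours V E v. d w) = (\<Sum>v\<in>V. d v * d v)"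
    using sum_sum_neighbours[OF sg, of d] unfolding d_def .
  have three: "3 * ind_count 3 V E = (\<Sum>v\<in>V. ind_count 2 (non_neighbours V E v) E)"
    using Suc_mult_ind_count[OF sg, of 2] by simp
  have "int (6 * ind_count 3 V E) = (\<Sum>v\<in>V. 2 * int (ind_count 2 (non_neighbours V E v) E))"
    using arg_cong[OF three, of "\<lambda>x. 2 * int x"] by (simp add: sum_distrib_left)
  also have "\<dots> \<le> (\<Sum>v\<in>V. f v - 2 * ?m + 2 * (\<Sum>w\<in>neighbours V E v. d w))"
    using twice_ind_count_two_non_neighbours_le[OF sg] unfolding f_def d_def n_def
    by (intro sum_mono) simp
  also have "\<dots> = (\<Sum>v\<in>V. f v) - n * (2 * ?m) + 2 * (\<Sum>v\<in>V. \<Sum>w\<in>neighbours V E v. d w)"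
    by (simp add: sum.distrib sum_subtractf sum_distrib_left n_def)
  also have "\<dots> = (\<Sum>v\<in>V. f v) - n * (\<Sum>v\<in>V. d v) + 2 * (\<Sum>v\<in>V. d v * d v)"
    unfolding sum_d sum_neighbour_d ..
  also have "\<dots> = (\<Sum>v\<in>V. f v + 2 * d v * d v - n * d v)"
    by (simp add: sum.distrib sum_subtractf sum_distrib_left mult.assoc)
  finally show ?thesis
    unfolding f_def .
qed

text \<open>The left side minus the right side is 3 (d - 1) (d - (n - 2)).\<close>

lemma quadratic_degree_bound:
  fixes n d :: int
  assumes "1 \<le> d" "d \<le> n - 2"
  shows "(n - 1 - d) * (n - 2 - d) + 2 * d * d - n * d \<le> (n - 2) * (n - 4)"
proof -
  have "0 \<le> (d - 1) * (n - 2 - d)"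
    using assms by simp
  then show ?thesis
    by (simp add: algebra_simps)
qed

lemma ind_count_three_less:
  assumes sg: "simple_graph V E" and deg: "\<forall>v\<in>V. 1 \<le> degree E v"
    and no_universal: "\<forall>v\<in>V. \<exists>w\<in>V - {v}. {v, w} \<notin> E" and "4 \<le> card V"
  shows "ind_count 3 V E < (card V - 1) choose 3"
proof -
  define n where "n = int (card V)"
  have degree_bounds: "1 \<le> int (degree E v) \<and> int (degree E v) \<le> n - 2" if "v \<in> V" for v
    using deg no_universal degree_le_card_minus_two[OF sg] \<open>v \<in> V\<close> \<open>4 \<le> card V\<close>
    unfolding n_def by fastforce
  have "int (6 * ind_count 3 V E)
      \<le> (\<Sum>v\<in>V. (n - 1 - int (degree E v)) * (n - 2 - int (degree E v))
          + 2 * int (degree E v) * int (degree E v) - n * int (degree E v))"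
    using six_mult_ind_count_three_le[OF sg] unfolding n_def .
  also have "\<dots> \<le> (\<Sum>v\<in>V. (n - 2) * (n - 4))"
    using degree_bounds by (intro sum_mono quadratic_degree_bound) auto
  also have "\<dots> = n * (n - 2) * (n - 4)"
    by (simp add: n_def)
  also have "\<dots> < (n - 1) * (n - 2) * (n - 3)"
    using \<open>4 \<le> card V\<close> unfolding n_def by (simp add: algebra_simps)
  also have "\<dots> = int (6 * ((card V - 1) choose 3))"
    using \<open>4 \<le> card V\<close> unfolding n_def by (simp add: six_mult_choose_three of_nat_diff)
  finally show ?thesis
    by linarith
qed

section \<open>From size k to size k + 1\<close>

lemma card_independent_subsets:
  assumes "independent_set V E S" "card S = Suc k"
  shows "card {T. independent_set V E T \<and> card T = k \<and> T \<subseteq> S} = Suc k"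
proof -
  have "{T. independent_set V E T \<and> card T = k \<and> T \<subseteq> S} = {T. T \<subseteq> S \<and> card T = k}"
    using assms(1) independent_set_subset by blast
  moreover have "finite S"
    using assms(2) card_ge_0_finite by force
  ultimately show ?thesis
    using assms(2) by (simp add: n_subsets)
qed

lemma card_independent_extensions_le:
  assumes sg: "simple_graph V E" and deg: "\<forall>v\<in>V. 1 \<le> degree E v"
    and T: "independent_set V E T" "card T = k" and "1 \<le> k"
  shows "card {S. independent_set V E S \<and> card S = Suc k \<and> T \<subseteq> S} \<le> card V - Suc k"
proof -
  have fin: "finite V"
    using sg by (rule simple_graph_finite)
  obtain x where "x \<in> T"
    using T(2) \<open>1 \<le> k\<close> by fastforce
  then have "x \<in> V"
    using T(1) by (auto simp: independent_set_def)
  then have "neighbours V E x \<noteq> {}"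
    using deg degree_eq_card_neighbours[OF sg, of x] by fastforce
  then obtain y where y: "y \<in> V" "{x, y} \<in> E"
    by (auto simp: neighbours_def)
  then have "y \<notin> T"
    using T(1) \<open>x \<in> T\<close> by (auto simp: independent_set_def)
  have "{S. independent_set V E S \<and> card S = Suc k \<and> T \<subseteq> S} \<subseteq> (\<lambda>z. insert z T) ` (V - T - {y})"
  proof
    fix S assume S: "S \<in> {S. independent_set V E S \<and> card S = Suc k \<and> T \<subseteq> S}"
    then have "finite T" "card (S - T) = 1"
      using T(2) card_ge_0_finite[of S] finite_subset[of T S] by (auto simp: card_Diff_subset)
    then obtain z where z: "S - T = {z}"
      using card_1_singletonE by blast
    then have "S = insert z T" "z \<noteq> y"
      using S y \<open>x \<in> T\<close> by (auto simp: independent_set_def)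
    then show "S \<in> (\<lambda>z. insert z T) ` (V - T - {y})"
      using S z by (auto simp: independent_set_def)
  qed
  then have "card {S. independent_set V E S \<and> card S = Suc k \<and> T \<subseteq> S} \<le> card (V - T - {y})"
    using fin by (meson card_image_le card_mono finite_Diff finite_imageI order_trans)
  also have "\<dots> = card V - Suc k"
    using T fin y \<open>y \<notin> T\<close> finite_subset[of T V]
    by (simp add: card_Diff_subset independent_set_def)
  finally show ?thesis .
qed

lemma Suc_mult_ind_count_le:
  assumes sg: "simple_graph V E" and deg: "\<forall>v\<in>V. 1 \<le> degree E v" and "1 \<le> k"
  shows "Suc k * ind_count (Suc k) V E \<le> (card V - Suc k) * ind_count k V E"
proof -
  let ?A = "{S. independent_set V E S \<and> card S = Suc k}"
  let ?B = "{T. independent_set V E T \<and> card T = k}"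
  have fin: "finite V"
    using sg by (rule simple_graph_finite)
  have "Suc k * card ?A = (\<Sum>T\<in>?B. card {S\<in>?A. T \<subseteq> S})"
    using card_independent_subsets
    by (intro sum_multicount[symmetric] finite_independent_sets fin) auto
  also have "\<dots> \<le> (\<Sum>T\<in>?B. card V - Suc k)"
    using card_independent_extensions_le[OF sg deg _ _ \<open>1 \<le> k\<close>]
    by (intro sum_mono) (simp add: conj_assoc)
  finally show ?thesis
    by (simp add: ind_count_def mult.commute)
qed

lemma ind_count_less_if_no_universal_vertex:
  assumes sg: "simple_graph V E" and deg: "\<forall>v\<in>V. 1 \<le> degree E v"
    and no_universal: "\<forall>v\<in>V. \<exists>w\<in>V - {v}. {v, w} \<notin> E" and "4 \<le> card V"
    and "3 \<le> t" "t \<le> card V - 1"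
  shows "ind_count t V E < (card V - 1) choose t"
  using \<open>3 \<le> t\<close> \<open>t \<le> card V - 1\<close>
proof (induction t rule: dec_induct)
  case base
  show ?case
    using ind_count_three_less[OF sg deg no_universal \<open>4 \<le> card V\<close>] .
next
  case (step k)
  have "Suc k * ind_count (Suc k) V E \<le> (card V - Suc k) * ind_count k V E"
    using step.hyps by (intro Suc_mult_ind_count_le[OF sg deg]) simp
  also have "\<dots> < (card V - Suc k) * ((card V - 1) choose k)"
    using step by simp
  also have "\<dots> = Suc k * ((card V - 1) choose Suc k)"
    using binomial_absorption[of k "card V - 1"] binomial_absorb_comp[of "card V - 1" k] by simp
  finally show ?case
    by (metis mult_less_cancel1)
qed

theorem mainTheorem6:
  fixes V :: "'a set" and E :: "'a set set" and n t :: nat and c :: 'a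
  assumes "simple_graph V E"
    and "card V = n"
    and "n \<ge> 4"
    and "3 \<le> t" and "t \<le> n - 1"
    and "\<forall>v\<in>V. degree E v \<ge> 1"
    and "\<not> is_star V E"
    and "c \<in> V"
  shows "ind_count t V E < ind_count t V (star_edges V c)"
proof -
  have star: "ind_count t V (star_edges V c) = (n - 1) choose t"
    using ind_count_star[OF simple_graph_finite[OF assms(1)] assms(8)] assms(2,4) by simp
  show ?thesis
  proof (cases "\<exists>u\<in>V. \<forall>w\<in>V - {u}. {u, w} \<in> E")
    case True
    then obtain u where "u \<in> V" "\<forall>w\<in>V - {u}. {u, w} \<in> E"
      by blast
    then show ?thesis
      using ind_count_less_if_universal_vertex[OF assms(1)] assms(2,4,5,7) star by simp
  next
    case False
    then show ?thesis
      using ind_count_less_if_no_universal_vertex[OF assms(1,6)] assms(2-5) star by auto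
  qed
qed

end
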